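(* For every $k\ge0$ there are constants $c,c'>0$ such that the following holds. For every $n\ge2k$ and every weighted $k$-uniform hypergraph $w$ on $[n]$, $$cn^{-k}\|w\|_1 \le \sum_{i=0}^k W_i\le c'n^{-k}\|w\|_1,$$ where $(W_0,\ldots,W_k)$ is the $W$-vector of $w$.
   Context: $[n]=\{1,\dots,n\}$; $V^{(k)}$ is the family of $k$-subsets of $V$; a weighted $k$-uniform hypergraph on $V$ is a function $w:V^{(k)}\to\mathbb{R}$; $w(S)=\sum_{e\in S^{(k)}}w(e)$; $\|w\|_1=\sum_e|w(e)|$. $W$-vector (defined recursively on $k$): for $w$ on an $n$-set $V$, $W_0=|w(V)|/\binom nk$ (for $k=0$, $w$ is a single real number and $W_0=|w|$). For $k\ge1$ and distinct $x,y\in V$, $w^{xy}:(V\setminus\{x,y\})^{(k-1)}\to\mathbb{R}$ is $w^{xy}(e)=w(e\cup\{x\})-w(e\cup\{y\})$; with $(W^{xy}_0,\ldots,W^{xy}_{k-1})$ its $W$-vector, $W_i=\frac{1}{n(n-1)}\sum_{(x,y):\,x\ne y}W^{xy}_{i-1}$ for $1\le i\le k$ (average over ordered pairs of distinct vertices). *)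

theory Defs
  imports Complex_Main
begin

definition ksubsets :: "nat \<Rightarrow> 'a set \<Rightarrow> 'a set set" where
  "ksubsets k V = {e. e \<subseteq> V \<and> card e = k}"

definition hsum :: "nat \<Rightarrow> ('a set \<Rightarrow> real) \<Rightarrow> 'a set \<Rightarrow> real" where
  "hsum k w S = (\<Sum>e\<in>ksubsets k S. w e)"

definition hnorm1 :: "nat \<Rightarrow> ('a set \<Rightarrow> real) \<Rightarrow> 'a set \<Rightarrow> real" where
  "hnorm1 k w V = (\<Sum>e\<in>ksubsets k V. \<bar>w e\<bar>)"

definition wdiff :: "('a set \<Rightarrow> real) \<Rightarrow> 'a \<Rightarrow> 'a \<Rightarrow> 'a set \<Rightarrow> real" where
  "wdiff w x y e = w (insert x e) - w (insert y e)"

text \<open>Wvec i k V w is the entry W_i of the W-vector of the weighted k-uniform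
  hypergraph w on the vertex set V (meaningful for i \<le> k; set to 0 for i > k).\<close>
primrec Wvec :: "nat \<Rightarrow> nat \<Rightarrow> 'a set \<Rightarrow> ('a set \<Rightarrow> real) \<Rightarrow> real" where
  "Wvec 0 k V w = \<bar>hsum k w V\<bar> / real (card V choose k)"
| "Wvec (Suc i) k V w =
     (if Suc i \<le> k then
        (\<Sum>x\<in>V. \<Sum>y\<in>V - {x}. Wvec i (k - 1) (V - {x, y}) (wdiff w x y))
          / (real (card V) * (real (card V) - 1))
      else 0)"

end

theory Submission
  imports Defs
begin

text \<open>Both bounds go by induction on \<open>k\<close>, since \<open>W\<^sub>1, \<dots>, W\<^sub>k\<close> are averages, over ordered
  pairs \<open>x \<noteq> y\<close>, of the \<open>W\<close>-vectors of the derived hypergraphs \<open>w\<^sup>x\<^sup>y\<close>. The upper bound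
  needs only \<open>|w(V)| \<le> \<parallel>w\<parallel>\<close> and the triangle inequality \<open>\<Sum>\<^sub>x\<^sub>\<noteq>\<^sub>y \<parallel>w\<^sup>x\<^sup>y\<parallel> \<le> 2nk \<parallel>w\<parallel>\<close>.
  The lower bound rests on the Poincare-type inequality
  \<open>n \<parallel>w\<parallel> \<le> n |w(V)| + 2k \<Sum>\<^sub>x\<^sub>\<noteq>\<^sub>y \<parallel>w\<^sup>x\<^sup>y\<parallel>\<close> for \<open>2k \<le> n\<close>, proved by induction on \<open>k\<close>
  through the degree hypergraph \<open>deg(e) = \<Sum>\<^sub>x\<^sub>\<notin>\<^sub>e w(e \<union> {x})\<close> of the \<open>(k-1)\<close>-sets \<open>e\<close>:
  averaging \<open>w(e \<union> {x}) = w(e \<union> {y}) + w\<^sup>x\<^sup>y(e)\<close> over \<open>y \<notin> e\<close> bounds \<open>\<parallel>w\<parallel>\<close> by \<open>\<parallel>deg\<parallel>\<close> and the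
  \<open>\<parallel>w\<^sup>x\<^sup>y\<parallel>\<close>; moreover \<open>deg(V) = k w(V)\<close>, and taking degrees commutes with passing to \<open>w\<^sup>x\<^sup>y\<close>,
  so the inequality for \<open>deg\<close> closes the induction.\<close>

lemma finite_ksubsets [simp]: "finite V \<Longrightarrow> finite (ksubsets k V)"
  unfolding ksubsets_def by (rule finite_subset[of _ "Pow V"]) auto

lemma ksubsets_0: "finite V \<Longrightarrow> ksubsets 0 V = {{}}"
  by (auto simp: ksubsets_def dest: finite_subset)

lemma hnorm1_nonneg: "hnorm1 k w V \<ge> 0"
  unfolding hnorm1_def by (rule sum_nonneg) simp

lemma abs_hsum_le_hnorm1: "\<bar>hsum k w V\<bar> \<le> hnorm1 k w V"
  unfolding hsum_def hnorm1_def by (rule sum_abs)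

lemma card_Diff_ksubset:
  assumes "finite V" "e \<in> ksubsets m V"
  shows "card (V - e) = card V - m"
  using assms by (auto simp: ksubsets_def card_Diff_subset finite_subset)

lemma card_Diff_pair:
  assumes "finite V" "x \<in> V" "y \<in> V - {x}"
  shows "card (V - {x, y}) = card V - 2"
  using assms by (subst card_Diff_subset) auto

lemma sum_ksubsets_Diff_swap:
  assumes "finite V"
  shows "(\<Sum>x\<in>V. \<Sum>e\<in>ksubsets m (V - {x}). h x e) = (\<Sum>e\<in>ksubsets m V. \<Sum>x\<in>V - e. h x e)"
proof -
  have "(\<Sum>x\<in>V. \<Sum>e\<in>ksubsets m (V - {x}). h x e)
      = (\<Sum>x\<in>V. \<Sum>e\<in>{e. e \<in> ksubsets m V \<and> x \<notin> e}. h x e)"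
    by (intro sum.cong refl) (auto simp: ksubsets_def)
  also have "\<dots> = (\<Sum>e\<in>ksubsets m V. \<Sum>x\<in>{x. x \<in> V \<and> x \<notin> e}. h x e)"
    by (rule sum.swap_restrict) (use assms in auto)
  also have "\<dots> = (\<Sum>e\<in>ksubsets m V. \<Sum>x\<in>V - e. h x e)"
    by (intro sum.cong refl) auto
  finally show ?thesis .
qed

lemma sum_pairs_ksubsets_swap:
  assumes "finite V"
  shows "(\<Sum>x\<in>V. \<Sum>y\<in>V - {x}. \<Sum>e\<in>ksubsets m (V - {x, y}). h x y e)
       = (\<Sum>e\<in>ksubsets m V. \<Sum>x\<in>V - e. \<Sum>y\<in>V - e - {x}. h x y e)"
proof -
  have "(\<Sum>y\<in>V - {x}. \<Sum>e\<in>ksubsets m (V - {x, y}). h x y e)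
      = (\<Sum>e\<in>ksubsets m (V - {x}). \<Sum>y\<in>V - e - {x}. h x y e)" for x
    using sum_ksubsets_Diff_swap[where V = "V - {x}" and m = m and h = "h x"] assms
    by (simp add: Diff_insert2[symmetric] insert_commute Diff_insert[symmetric])
  then show ?thesis
    using sum_ksubsets_Diff_swap[OF assms, where m = m and h = "\<lambda>x e. \<Sum>y\<in>V - e - {x}. h x y e"] by simp
qed

lemma sum_ksubsets_insert:
  assumes "finite V"
  shows "(\<Sum>e\<in>ksubsets m V. \<Sum>x\<in>V - e. g (insert x e))
       = real (Suc m) * (\<Sum>f\<in>ksubsets (Suc m) V. g f)"
proof -
  have bij: "bij_betw (insert x) (ksubsets m (V - {x})) {f \<in> ksubsets (Suc m) V. x \<in> f}"
    if "x \<in> V" for x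
    by (rule bij_betw_byWitness[where f' = "\<lambda>f. f - {x}"])
       (use that assms in \<open>auto simp: ksubsets_def card_insert_if finite_subset
          intro!: image_eqI[where x = "_ - {x}"]\<close>)
  have "(\<Sum>e\<in>ksubsets m V. \<Sum>x\<in>V - e. g (insert x e))
      = (\<Sum>x\<in>V. \<Sum>e\<in>ksubsets m (V - {x}). g (insert x e))"
    by (rule sum_ksubsets_Diff_swap[OF assms, symmetric])
  also have "\<dots> = (\<Sum>x\<in>V. \<Sum>f\<in>{f \<in> ksubsets (Suc m) V. x \<in> f}. g f)"
    by (intro sum.cong refl sum.reindex_bij_betw[OF bij])
  also have "\<dots> = (\<Sum>f\<in>ksubsets (Suc m) V. \<Sum>x\<in>{x \<in> V. x \<in> f}. g f)"
    by (rule sum.swap_restrict) (use assms in auto)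
  also have "\<dots> = (\<Sum>f\<in>ksubsets (Suc m) V. real (Suc m) * g f)"
    by (intro sum.cong refl) (auto simp: ksubsets_def Collect_conj_eq Int_absorb1)
  finally show ?thesis by (simp add: sum_distrib_left)
qed

definition hdeg :: "'a set \<Rightarrow> ('a set \<Rightarrow> real) \<Rightarrow> 'a set \<Rightarrow> real" where
  "hdeg V w e = (\<Sum>x\<in>V - e. w (insert x e))"

lemma hsum_hdeg: "finite V \<Longrightarrow> hsum m (hdeg V w) V = real (Suc m) * hsum (Suc m) w V"
  unfolding hsum_def hdeg_def by (rule sum_ksubsets_insert)

lemma hnorm1_hdeg_le:
  assumes "finite V"
  shows "hnorm1 m (hdeg V w) V \<le> real (Suc m) * hnorm1 (Suc m) w V"
proof -
  have "hnorm1 m (hdeg V w) V \<le> (\<Sum>e\<in>ksubsets m V. \<Sum>x\<in>V - e. \<bar>w (insert x e)\<bar>)"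
    unfolding hnorm1_def hdeg_def by (intro sum_mono sum_abs)
  also have "\<dots> = real (Suc m) * hnorm1 (Suc m) w V"
    unfolding hnorm1_def by (rule sum_ksubsets_insert[OF assms])
  finally show ?thesis .
qed

lemma wdiff_hdeg:
  assumes "finite V" "x \<in> V" "y \<in> V" "x \<noteq> y" "e \<subseteq> V - {x, y}"
  shows "wdiff (hdeg V w) x y e = hdeg (V - {x, y}) (wdiff w x y) e"
proof -
  have "V - insert x e = insert y (V - {x, y} - e)" "V - insert y e = insert x (V - {x, y} - e)"
    using assms by auto
  then show ?thesis
    using assms by (simp add: wdiff_def hdeg_def sum_subtractf insert_commute)
qed

lemma hnorm1_wdiff_hdeg_le:
  assumes "finite V" "x \<in> V" "y \<in> V" "x \<noteq> y"
  shows "hnorm1 m (wdiff (hdeg V w) x y) (V - {x, y})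
       \<le> real (Suc m) * hnorm1 (Suc m) (wdiff w x y) (V - {x, y})"
proof -
  have "hnorm1 m (wdiff (hdeg V w) x y) (V - {x, y}) = hnorm1 m (hdeg (V - {x, y}) (wdiff w x y)) (V - {x, y})"
    unfolding hnorm1_def using assms by (intro sum.cong refl) (auto simp: ksubsets_def wdiff_hdeg)
  also have "\<dots> \<le> real (Suc m) * hnorm1 (Suc m) (wdiff w x y) (V - {x, y})"
    using assms by (intro hnorm1_hdeg_le) simp
  finally show ?thesis .
qed

lemma card_Diff_mult_eq_hdeg_plus_wdiff:
  assumes "finite V" "x \<in> V - e"
  shows "real (card (V - e)) * w (insert x e) = hdeg V w e + (\<Sum>y\<in>V - e - {x}. wdiff w x y e)"
proof -
  have drop_x: "(\<Sum>y\<in>V - e. wdiff w x y e) = (\<Sum>y\<in>V - e - {x}. wdiff w x y e)"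
    using assms by (intro sum.mono_neutral_right) (auto simp: wdiff_def)
  have "real (card (V - e)) * w (insert x e) = hdeg V w e + (\<Sum>y\<in>V - e. wdiff w x y e)"
    by (simp add: hdeg_def wdiff_def sum_subtractf)
  then show ?thesis
    by (simp only: drop_x)
qed

lemma hnorm1_Suc_le_hdeg_wdiff:
  assumes fin: "finite V" and cV: "card V = n"
  shows "real (n - m) * real (Suc m) * hnorm1 (Suc m) w V
     \<le> real (n - m) * hnorm1 m (hdeg V w) V
       + (\<Sum>x\<in>V. \<Sum>y\<in>V - {x}. hnorm1 m (wdiff w x y) (V - {x, y}))"
proof -
  have card_Diff: "card (V - e) = n - m" if "e \<in> ksubsets m V" for e
    using card_Diff_ksubset[OF fin that] cV by simp
  have pointwise: "real (n - m) * \<bar>w (insert x e)\<bar>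
      \<le> \<bar>hdeg V w e\<bar> + (\<Sum>y\<in>V - e - {x}. \<bar>wdiff w x y e\<bar>)"
    if "e \<in> ksubsets m V" "x \<in> V - e" for e x
  proof -
    have "real (n - m) * \<bar>w (insert x e)\<bar> = \<bar>hdeg V w e + (\<Sum>y\<in>V - e - {x}. wdiff w x y e)\<bar>"
      using card_Diff_mult_eq_hdeg_plus_wdiff[OF fin that(2), of w] card_Diff[OF that(1)]
      by (metis abs_mult abs_of_nat)
    also have "\<dots> \<le> \<bar>hdeg V w e\<bar> + (\<Sum>y\<in>V - e - {x}. \<bar>wdiff w x y e\<bar>)"
      by (intro order.trans[OF abs_triangle_ineq] add_left_mono sum_abs)
    finally show ?thesis .
  qed
  have "real (n - m) * real (Suc m) * hnorm1 (Suc m) w V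
      = real (n - m) * (\<Sum>e\<in>ksubsets m V. \<Sum>x\<in>V - e. \<bar>w (insert x e)\<bar>)"
    using sum_ksubsets_insert[OF fin, where m = m and g = "\<lambda>f. \<bar>w f\<bar>"]
    by (simp add: hnorm1_def)
  also have "\<dots> = (\<Sum>e\<in>ksubsets m V. \<Sum>x\<in>V - e. real (n - m) * \<bar>w (insert x e)\<bar>)"
    by (simp add: sum_distrib_left)
  also have "\<dots> \<le> (\<Sum>e\<in>ksubsets m V. \<Sum>x\<in>V - e.
                    \<bar>hdeg V w e\<bar> + (\<Sum>y\<in>V - e - {x}. \<bar>wdiff w x y e\<bar>))"
    by (intro sum_mono pointwise) auto
  also have "\<dots> = (\<Sum>e\<in>ksubsets m V. real (n - m) * \<bar>hdeg V w e\<bar>)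
       + (\<Sum>e\<in>ksubsets m V. \<Sum>x\<in>V - e. \<Sum>y\<in>V - e - {x}. \<bar>wdiff w x y e\<bar>)"
    by (simp add: sum.distrib card_Diff)
  also have "\<dots> = real (n - m) * hnorm1 m (hdeg V w) V
       + (\<Sum>x\<in>V. \<Sum>y\<in>V - {x}. hnorm1 m (wdiff w x y) (V - {x, y}))"
    by (simp add: hnorm1_def sum_distrib_left sum_pairs_ksubsets_swap[OF fin])
  finally show ?thesis .
qed

text \<open>For \<open>k = 0\<close> the truncated \<open>k - 1\<close> is harmless: the factor \<open>2 * real k\<close> kills that term.\<close>

lemma hnorm1_poincare:
  assumes fin: "finite V" and cV: "card V = n" and kn: "2 * k \<le> n"
  shows "real n * hnorm1 k w V \<le> real n * \<bar>hsum k w V\<bar>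
     + 2 * real k * (\<Sum>x\<in>V. \<Sum>y\<in>V - {x}. hnorm1 (k - 1) (wdiff w x y) (V - {x, y}))"
  using kn
proof (induction k arbitrary: w)
  case 0
  then show ?case using fin by (simp add: hnorm1_def hsum_def ksubsets_0)
next
  case (Suc m)
  define u where "u = hdeg V w"
  define T where "T = (\<Sum>x\<in>V. \<Sum>y\<in>V - {x}. hnorm1 m (wdiff w x y) (V - {x, y}))"
  define H where "H = hsum (Suc m) w V"
  define a where "a = real (n - m)"
  define b where "b = real (Suc m)"
  have T_nonneg: "T \<ge> 0" unfolding T_def by (intro sum_nonneg hnorm1_nonneg)
  have a_pos: "a > 0" and n_le: "real n \<le> 2 * a"
    using Suc.prems unfolding a_def by (auto simp: of_nat_diff)
  have wdiff_u: "real m * hnorm1 (m - 1) (wdiff u x y) (V - {x, y})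
      \<le> real m * real m * hnorm1 m (wdiff w x y) (V - {x, y})"
    if "x \<in> V" "y \<in> V - {x}" for x y
    using hnorm1_wdiff_hdeg_le[OF fin, of x y "m - 1" w] that
    by (cases m) (auto simp: u_def intro: mult_left_mono)
  have "(\<Sum>x\<in>V. \<Sum>y\<in>V - {x}. real m * hnorm1 (m - 1) (wdiff u x y) (V - {x, y}))
      \<le> (\<Sum>x\<in>V. \<Sum>y\<in>V - {x}. real m * real m * hnorm1 m (wdiff w x y) (V - {x, y}))"
    by (intro sum_mono wdiff_u)
  then have sum_wdiff_u: "(\<Sum>x\<in>V. \<Sum>y\<in>V - {x}. real m * hnorm1 (m - 1) (wdiff u x y) (V - {x, y}))
      \<le> real m * real m * T"
    unfolding T_def by (simp add: sum_distrib_left)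
  have "real n * hnorm1 m u V \<le> real n * \<bar>hsum m u V\<bar>
     + 2 * (\<Sum>x\<in>V. \<Sum>y\<in>V - {x}. real m * hnorm1 (m - 1) (wdiff u x y) (V - {x, y}))"
    using Suc.IH[of u] Suc.prems by (simp add: sum_distrib_left mult.assoc)
  also have "\<dots> \<le> real n * b * \<bar>H\<bar> + 2 * (real m * real m * T)"
    using sum_wdiff_u by (simp add: u_def H_def b_def hsum_hdeg[OF fin] abs_mult)
  finally have u_bound: "real n * hnorm1 m u V \<le> real n * b * \<bar>H\<bar> + 2 * (real m * real m * T)" .
  have "a * b * (real n * hnorm1 (Suc m) w V) \<le> real n * (a * hnorm1 m u V + T)"
    using hnorm1_Suc_le_hdeg_wdiff[OF fin cV, of m w]
    unfolding a_def b_def u_def T_def by (simp add: mult_left_mono mult.left_commute)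
  also have "\<dots> \<le> a * (real n * b * \<bar>H\<bar> + 2 * (real m * real m * T)) + a * (4 * real m + 2) * T"
  proof -
    have "real n * T \<le> a * (4 * real m + 2) * T"
      using n_le a_pos T_nonneg by (intro mult_right_mono order.trans[OF n_le]) auto
    moreover have "a * (real n * hnorm1 m u V) \<le> a * (real n * b * \<bar>H\<bar> + 2 * (real m * real m * T))"
      using u_bound a_pos by (intro mult_left_mono) auto
    ultimately show ?thesis by (simp add: algebra_simps)
  qed
  also have "\<dots> = a * b * (real n * \<bar>H\<bar> + 2 * b * T)"
    unfolding b_def by (simp add: algebra_simps)
  finally show ?case
    using a_pos unfolding H_def T_def b_def by (simp add: mult_le_cancel_left_pos)
qed

lemma sum_hnorm1_wdiff_le:
  assumes fin: "finite V" and cV: "card V = n"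
  shows "(\<Sum>x\<in>V. \<Sum>y\<in>V - {x}. hnorm1 m (wdiff w x y) (V - {x, y}))
     \<le> 2 * real n * real (Suc m) * hnorm1 (Suc m) w V"
proof -
  have inner: "(\<Sum>x\<in>V - e. \<Sum>y\<in>V - e - {x}. \<bar>wdiff w x y e\<bar>)
       \<le> 2 * real n * (\<Sum>x\<in>V - e. \<bar>w (insert x e)\<bar>)" for e
  proof -
    let ?a = "\<lambda>z. \<bar>w (insert z e)\<bar>"
    have "(\<Sum>x\<in>V - e. \<Sum>y\<in>V - e - {x}. \<bar>wdiff w x y e\<bar>) \<le> (\<Sum>x\<in>V - e. \<Sum>y\<in>V - e. ?a x + ?a y)"
      using fin by (intro sum_mono order.trans[OF _ sum_mono2[of "V - e" "V - e - {_}"]])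
                   (auto simp: wdiff_def abs_triangle_ineq4 intro!: sum_mono)
    also have "\<dots> = 2 * real (card (V - e)) * (\<Sum>x\<in>V - e. ?a x)"
      by (simp add: sum.distrib sum.swap[of "\<lambda>x y. ?a y"] sum_distrib_left algebra_simps)
    also have "\<dots> \<le> 2 * real n * (\<Sum>x\<in>V - e. ?a x)"
      using card_mono[OF fin, of "V - e"] cV by (intro mult_right_mono sum_nonneg) auto
    finally show ?thesis .
  qed
  have "(\<Sum>x\<in>V. \<Sum>y\<in>V - {x}. hnorm1 m (wdiff w x y) (V - {x, y}))
      = (\<Sum>e\<in>ksubsets m V. \<Sum>x\<in>V - e. \<Sum>y\<in>V - e - {x}. \<bar>wdiff w x y e\<bar>)"
    by (simp add: hnorm1_def sum_pairs_ksubsets_swap[OF fin])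
  also have "\<dots> \<le> (\<Sum>e\<in>ksubsets m V. 2 * real n * (\<Sum>x\<in>V - e. \<bar>w (insert x e)\<bar>))"
    by (intro sum_mono inner)
  also have "\<dots> = 2 * real n * real (Suc m) * hnorm1 (Suc m) w V"
    using sum_ksubsets_insert[OF fin, where m = m and g = "\<lambda>f. \<bar>w f\<bar>"]
    by (simp add: hnorm1_def flip: sum_distrib_left)
  finally show ?thesis .
qed

lemma Wvec_nonneg: "Wvec i k V w \<ge> 0"
proof (induction i arbitrary: k V w)
  case 0
  then show ?case by simp
next
  case (Suc i)
  have "real (card V) * (real (card V) - 1) \<ge> 0"
    by (cases "card V") auto
  with Suc.IH show ?case by (auto intro!: divide_nonneg_nonneg sum_nonneg)
qed

lemma sum_Wvec_Suc:
  "(\<Sum>i=0..Suc m. Wvec i (Suc m) V w) = Wvec 0 (Suc m) V w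
    + (\<Sum>x\<in>V. \<Sum>y\<in>V - {x}. \<Sum>i=0..m. Wvec i m (V - {x, y}) (wdiff w x y))
       / (real (card V) * (real (card V) - 1))"
proof -
  have "(\<Sum>i=0..m. Wvec (Suc i) (Suc m) V w)
      = (\<Sum>i=0..m. \<Sum>x\<in>V. \<Sum>y\<in>V - {x}. Wvec i m (V - {x, y}) (wdiff w x y))
         / (real (card V) * (real (card V) - 1))"
    by (simp add: sum_divide_distrib)
  also have "\<dots> = (\<Sum>x\<in>V. \<Sum>y\<in>V - {x}. \<Sum>i=0..m. Wvec i m (V - {x, y}) (wdiff w x y))
         / (real (card V) * (real (card V) - 1))"
    by (subst sum.swap) (simp add: sum.swap[of _ "{0..m}"])
  finally show ?thesis
    by (simp only: sum.atLeast0_atMost_Suc_shift o_def)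
qed

lemma abs_hsum_le_Wvec0:
  assumes "card V = n" "k \<le> n"
  shows "\<bar>hsum k w V\<bar> \<le> real n ^ k * Wvec 0 k V w"
proof -
  have "real (n choose k) \<le> real n ^ k"
    using binomial_le_pow[OF assms(2)] by (metis of_nat_le_iff of_nat_power)
  moreover have "\<bar>hsum k w V\<bar> = real (n choose k) * Wvec 0 k V w"
    using assms by simp
  ultimately show ?thesis
    by (metis Wvec_nonneg mult_right_mono)
qed

lemma Wvec0_le_hnorm1:
  assumes "card V = n" "k \<le> n"
  shows "real n ^ k * Wvec 0 k V w \<le> real k ^ k * hnorm1 k w V"
proof -
  have binom_pos: "real (n choose k) > 0"
    using assms by simp
  have binom_bound: "real n ^ k \<le> real k ^ k * real (n choose k)"
    using binomial_ge_n_over_k_pow_k[OF assms(2), where 'a = real]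
    by (cases "k = 0") (simp_all add: power_divide divide_le_eq mult.commute)
  have "real n ^ k * Wvec 0 k V w = real n ^ k * \<bar>hsum k w V\<bar> / real (n choose k)"
    using assms by simp
  also have "\<dots> \<le> real k ^ k * real (n choose k) * \<bar>hsum k w V\<bar> / real (n choose k)"
    using binom_bound by (intro divide_right_mono mult_right_mono) auto
  also have "\<dots> = real k ^ k * \<bar>hsum k w V\<bar>"
    using binom_pos by simp
  also have "\<dots> \<le> real k ^ k * hnorm1 k w V"
    by (intro mult_left_mono abs_hsum_le_hnorm1) simp
  finally show ?thesis .
qed

lemma hnorm1_le_Wsum_step:
  fixes w :: "'a set \<Rightarrow> real"
  assumes fin: "finite V" and cV: "card V = n" and kn: "2 * Suc m \<le> n" and C_nonneg: "C \<ge> 0"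
    and wdiff_bound: "\<And>x y. x \<in> V \<Longrightarrow> y \<in> V - {x} \<Longrightarrow>
      hnorm1 m (wdiff w x y) (V - {x, y})
        \<le> C * real n ^ m * (\<Sum>i=0..m. Wvec i m (V - {x, y}) (wdiff w x y))"
  shows "hnorm1 (Suc m) w V
     \<le> (2 * real (Suc m) * C + 1) * real n ^ Suc m * (\<Sum>i=0..Suc m. Wvec i (Suc m) V w)"
proof -
  define N where "N = real n * (real n - 1)"
  define A where "A = (\<Sum>x\<in>V. \<Sum>y\<in>V - {x}. \<Sum>i=0..m. Wvec i m (V - {x, y}) (wdiff w x y)) / N"
  define W0 where "W0 = Wvec 0 (Suc m) V w"
  have N_pos: "N > 0" and N_le: "N \<le> real n * real n"
    using kn unfolding N_def by auto
  have A_nonneg: "A \<ge> 0"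
    unfolding A_def using N_pos by (intro divide_nonneg_pos sum_nonneg Wvec_nonneg) auto
  have W0_nonneg: "W0 \<ge> 0"
    unfolding W0_def by (rule Wvec_nonneg)
  have "(\<Sum>x\<in>V. \<Sum>y\<in>V - {x}. hnorm1 m (wdiff w x y) (V - {x, y}))
      \<le> (\<Sum>x\<in>V. \<Sum>y\<in>V - {x}. C * real n ^ m * (\<Sum>i=0..m. Wvec i m (V - {x, y}) (wdiff w x y)))"
    by (intro sum_mono wdiff_bound)
  also have "\<dots> = C * real n ^ m * (N * A)"
  proof -
    have "N * A = (\<Sum>x\<in>V. \<Sum>y\<in>V - {x}. \<Sum>i=0..m. Wvec i m (V - {x, y}) (wdiff w x y))"
      using N_pos unfolding A_def by simp
    then show ?thesis
      by (simp only: sum_distrib_left)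
  qed
  also have "\<dots> \<le> C * real n ^ m * (real n * real n * A)"
    using C_nonneg N_le A_nonneg by (intro mult_left_mono mult_right_mono) auto
  finally have T_bound: "(\<Sum>x\<in>V. \<Sum>y\<in>V - {x}. hnorm1 m (wdiff w x y) (V - {x, y}))
      \<le> C * real n ^ m * (real n * real n * A)" .
  have "real n * hnorm1 (Suc m) w V \<le> real n * \<bar>hsum (Suc m) w V\<bar>
      + 2 * real (Suc m) * (\<Sum>x\<in>V. \<Sum>y\<in>V - {x}. hnorm1 m (wdiff w x y) (V - {x, y}))"
    using hnorm1_poincare[OF fin cV kn, of w] by simp
  also have "\<dots> \<le> real n * (real n ^ Suc m * W0) + 2 * real (Suc m) * (C * real n ^ m * (real n * real n * A))"
    using abs_hsum_le_Wvec0[OF cV, of "Suc m" w] kn T_bound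
    unfolding W0_def by (intro add_mono mult_left_mono) auto
  also have "\<dots> = real n * (real n ^ Suc m * (W0 + 2 * real (Suc m) * C * A))"
    by (simp add: algebra_simps)
  also have "\<dots> \<le> real n * ((2 * real (Suc m) * C + 1) * real n ^ Suc m * (W0 + A))"
    using W0_nonneg A_nonneg C_nonneg
    by (intro mult_left_mono) (auto simp: algebra_simps intro!: mult_nonneg_nonneg)
  finally have "hnorm1 (Suc m) w V \<le> (2 * real (Suc m) * C + 1) * real n ^ Suc m * (W0 + A)"
    using kn by (simp add: mult_le_cancel_left_pos)
  moreover have "(\<Sum>i=0..Suc m. Wvec i (Suc m) V w) = W0 + A"
    unfolding sum_Wvec_Suc W0_def A_def N_def cV ..
  ultimately show ?thesis
    by simp
qed

lemma Wsum_le_hnorm1_step: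
  fixes w :: "'a set \<Rightarrow> real"
  assumes fin: "finite V" and cV: "card V = n" and kn: "2 * Suc m \<le> n" and D_nonneg: "D \<ge> 0"
    and wdiff_bound: "\<And>x y. x \<in> V \<Longrightarrow> y \<in> V - {x} \<Longrightarrow>
      real n ^ m * (\<Sum>i=0..m. Wvec i m (V - {x, y}) (wdiff w x y))
        \<le> D * hnorm1 m (wdiff w x y) (V - {x, y})"
  shows "real n ^ Suc m * (\<Sum>i=0..Suc m. Wvec i (Suc m) V w)
     \<le> (real (Suc m) ^ Suc m + 4 * real (Suc m) * D) * hnorm1 (Suc m) w V"
proof -
  define S where "S = (\<Sum>x\<in>V. \<Sum>y\<in>V - {x}. \<Sum>i=0..m. Wvec i m (V - {x, y}) (wdiff w x y))"
  define W where "W = hnorm1 (Suc m) w V"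
  have n_gt_1: "real n - 1 > 0"
    using kn by simp
  have W_nonneg: "W \<ge> 0"
    unfolding W_def by (rule hnorm1_nonneg)
  have "real n ^ m * S
      = (\<Sum>x\<in>V. \<Sum>y\<in>V - {x}. real n ^ m * (\<Sum>i=0..m. Wvec i m (V - {x, y}) (wdiff w x y)))"
    by (simp add: S_def sum_distrib_left)
  also have "\<dots> \<le> (\<Sum>x\<in>V. \<Sum>y\<in>V - {x}. D * hnorm1 m (wdiff w x y) (V - {x, y}))"
    by (intro sum_mono wdiff_bound)
  also have "\<dots> \<le> D * (2 * real n * real (Suc m) * W)"
    unfolding W_def sum_distrib_left[symmetric]
    by (intro mult_left_mono sum_hnorm1_wdiff_le fin cV D_nonneg)
  finally have S_bound: "real n ^ m * S \<le> real n * (2 * real (Suc m) * D * W)"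
    by (simp add: algebra_simps)
  have "real n ^ Suc m * (S / (real n * (real n - 1))) = real n ^ m * S / (real n - 1)"
    using kn by (simp add: field_simps)
  also have "\<dots> \<le> real n * (2 * real (Suc m) * D * W) / (real n - 1)"
    using S_bound n_gt_1 by (intro divide_right_mono) auto
  also have "\<dots> \<le> 2 * (2 * real (Suc m) * D * W)"
  proof -
    have "real n * (2 * real (Suc m) * D * W) \<le> 2 * (real n - 1) * (2 * real (Suc m) * D * W)"
      using kn D_nonneg W_nonneg by (intro mult_right_mono) auto
    then show ?thesis
      using n_gt_1 by (simp add: divide_le_eq algebra_simps)
  qed
  finally have "real n ^ Suc m * (S / (real n * (real n - 1))) \<le> 2 * (2 * real (Suc m) * D * W)" .
  moreover have "real n ^ Suc m * Wvec 0 (Suc m) V w \<le> real (Suc m) ^ Suc m * W"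
    unfolding W_def using kn by (intro Wvec0_le_hnorm1[OF cV]) simp
  ultimately show ?thesis
    unfolding sum_Wvec_Suc cV S_def[symmetric] W_def[symmetric] by (simp add: algebra_simps)
qed

primrec hnorm1_Wsum_const :: "nat \<Rightarrow> real" where
  "hnorm1_Wsum_const 0 = 1"
| "hnorm1_Wsum_const (Suc m) = 2 * real (Suc m) * hnorm1_Wsum_const m + 1"

text \<open>The factor \<open>2 ^ m\<close> pays for the recursion to \<open>n - 2\<close> vertices, via \<open>n \<le> 2 (n - 2)\<close>.\<close>

primrec Wsum_hnorm1_const :: "nat \<Rightarrow> real" where
  "Wsum_hnorm1_const 0 = 1"
| "Wsum_hnorm1_const (Suc m) = real (Suc m) ^ Suc m + 4 * real (Suc m) * (2 ^ m * Wsum_hnorm1_const m)"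

lemma hnorm1_Wsum_const_pos: "hnorm1_Wsum_const k > 0"
  by (induction k) (auto intro: add_nonneg_pos)

lemma Wsum_hnorm1_const_pos: "Wsum_hnorm1_const k > 0"
  by (induction k) (auto intro: add_pos_nonneg)

lemma hnorm1_le_Wsum:
  fixes w :: "'a set \<Rightarrow> real"
  assumes "finite V" "card V = n" "2 * k \<le> n"
  shows "hnorm1 k w V \<le> hnorm1_Wsum_const k * real n ^ k * (\<Sum>i=0..k. Wvec i k V w)"
  using assms
proof (induction k arbitrary: V n w)
  case 0
  then show ?case by (simp add: hnorm1_def hsum_def ksubsets_0)
next
  case (Suc m)
  show ?case
    unfolding hnorm1_Wsum_const.simps
  proof (rule hnorm1_le_Wsum_step[OF Suc.prems])
    fix x y assume xy: "x \<in> V" "y \<in> V - {x}"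
    let ?S = "\<Sum>i=0..m. Wvec i m (V - {x, y}) (wdiff w x y)"
    have "hnorm1 m (wdiff w x y) (V - {x, y}) \<le> hnorm1_Wsum_const m * real (n - 2) ^ m * ?S"
      using Suc.prems card_Diff_pair[OF Suc.prems(1) xy] by (intro Suc.IH) auto
    also have "\<dots> \<le> hnorm1_Wsum_const m * real n ^ m * ?S"
      using hnorm1_Wsum_const_pos[of m]
      by (intro mult_right_mono mult_left_mono power_mono sum_nonneg Wvec_nonneg) auto
    finally show "hnorm1 m (wdiff w x y) (V - {x, y}) \<le> hnorm1_Wsum_const m * real n ^ m * ?S" .
  qed (use hnorm1_Wsum_const_pos[of m] in simp)
qed

lemma Wsum_le_hnorm1:
  fixes w :: "'a set \<Rightarrow> real"
  assumes "finite V" "card V = n" "2 * k \<le> n"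
  shows "real n ^ k * (\<Sum>i=0..k. Wvec i k V w) \<le> Wsum_hnorm1_const k * hnorm1 k w V"
  using assms
proof (induction k arbitrary: V n w)
  case 0
  then show ?case by (simp add: hnorm1_def hsum_def ksubsets_0)
next
  case (Suc m)
  have n_le: "real n ^ m \<le> 2 ^ m * real (n - 2) ^ m"
  proof (cases m)
    case (Suc j)
    then have "real n \<le> 2 * real (n - 2)"
      using Suc.prems(3) by (simp add: of_nat_diff)
    then show ?thesis
      by (metis power_mono power_mult_distrib of_nat_0_le_iff)
  qed simp
  show ?case
    unfolding Wsum_hnorm1_const.simps
  proof (rule Wsum_le_hnorm1_step[OF Suc.prems])
    fix x y assume xy: "x \<in> V" "y \<in> V - {x}"
    let ?S = "\<Sum>i=0..m. Wvec i m (V - {x, y}) (wdiff w x y)"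
    have "real n ^ m * ?S \<le> 2 ^ m * (real (n - 2) ^ m * ?S)"
      using n_le by (simp add: mult_right_mono sum_nonneg Wvec_nonneg flip: mult.assoc)
    also have "\<dots> \<le> 2 ^ m * (Wsum_hnorm1_const m * hnorm1 m (wdiff w x y) (V - {x, y}))"
      using Suc.prems card_Diff_pair[OF Suc.prems(1) xy] by (intro mult_left_mono Suc.IH) auto
    finally show "real n ^ m * ?S \<le> 2 ^ m * Wsum_hnorm1_const m * hnorm1 m (wdiff w x y) (V - {x, y})"
      by (simp add: mult.assoc)
  qed (use Wsum_hnorm1_const_pos[of m] in simp)
qed

theorem lemma3p2:
  shows "\<forall>k::nat. \<exists>c c' :: real. c > 0 \<and> c' > 0 \<and>
     (\<forall>n::nat. n \<ge> 2 * k \<longrightarrow> (\<forall>w :: nat set \<Rightarrow> real.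
        c * hnorm1 k w {1..n} / real n ^ k \<le> (\<Sum>i=0..k. Wvec i k {1..n} w) \<and>
        (\<Sum>i=0..k. Wvec i k {1..n} w) \<le> c' * hnorm1 k w {1..n} / real n ^ k))"
proof (intro allI exI conjI impI)
  fix k :: nat
  show "1 / hnorm1_Wsum_const k > 0"
    using hnorm1_Wsum_const_pos by simp
  show "Wsum_hnorm1_const k > 0"
    by (rule Wsum_hnorm1_const_pos)
  fix n :: nat and w :: "nat set \<Rightarrow> real"
  assume kn: "2 * k \<le> n"
  have n_pow_pos: "real n ^ k > 0"
    using kn by (cases k) auto
  show "1 / hnorm1_Wsum_const k * hnorm1 k w {1..n} / real n ^ k \<le> (\<Sum>i=0..k. Wvec i k {1..n} w)"
    using hnorm1_le_Wsum[of "{1..n}" n k w] kn hnorm1_Wsum_const_pos[of k] n_pow_pos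
    by (simp add: divide_le_eq mult.commute mult.left_commute)
  show "(\<Sum>i=0..k. Wvec i k {1..n} w) \<le> Wsum_hnorm1_const k * hnorm1 k w {1..n} / real n ^ k"
    using Wsum_le_hnorm1[of "{1..n}" n k w] kn n_pow_pos
    by (simp add: le_divide_eq mult.commute)
qed

end
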